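(* Let $A\in\mathbb{Z}^{d\times n}$, $\mathbf{b}\in\mathbb{Z}^d$, $\mathbf{c}\in\mathbb{Z}^n$, $\mathbf{u}\in\mathbb{Z}_{\ge0}^n$, and consider the LP $\min\{\mathbf{c}^\top\mathbf{x} : A\mathbf{x}=\mathbf{b},\ \mathbf{0}\le\mathbf{x}\le\mathbf{u},\ \mathbf{x}\in\mathbb{R}^n\}$. Let $m$ be the number of distinct positive values of $-\mathbf{c}^\top\mathbf{z}/\|\mathbf{z}\|_1$ as $\mathbf{z}$ ranges over $\mathcal{C}(A)$. Then from any feasible solution, every sequence of discrete steepest-descent augmentations reaches an optimal solution after at most $n\cdot m$ augmentations.
   Context: The circuits $\mathcal{C}(A)$: for each nonzero $\mathbf{z}\in\ker(A)$ with inclusion-minimal support among nonzero vectors of $\ker(A)$, the line $\mathbb{R}\mathbf{z}$ contains exactly two nonzero integer points closest to the origin; $\mathcal{C}(A)$ is the set of all these vectors. Discrete steepest-descent augmentation (LP): given a feasible $\mathbf{x}_k$, choose $\mathbf{z}\in\mathcal{C}(A)$ maximizing $-\mathbf{c}^\top\mathbf{z}/\|\mathbf{z}\|_1$ among all $\mathbf{z}\in\mathcal{C}(A)$ such that $\mathbf{x}_k+\epsilon\mathbf{z}$ is feasible for some $\epsilon>0$; if this maximum is positive, let $\alpha$ be the largest real number with $\mathbf{x}_k+\alpha\mathbf{z}$ feasible and set $\mathbf{x}_{k+1}:=\mathbf{x}_k+\alpha\mathbf{z}$, otherwise stop. *)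

theory Defs
  imports "HOL-Analysis.Analysis"
begin

text \<open>Vectors are indexed by finite types: 'n indexes the n variables, 'd the d constraints.
  Integer data are embedded into the reals via of_int.\<close>

definition realM :: "int^'n^'d \<Rightarrow> real^'n^'d" where
  "realM A = (\<chi> i j. real_of_int (A $ i $ j))"

definition realV :: "int^'n \<Rightarrow> real^'n" where
  "realV v = (\<chi> i. real_of_int (v $ i))"

definition kerA :: "int^'n^'d \<Rightarrow> (real^'n) set" where
  "kerA A = {z. realM A *v z = 0}"

definition supp :: "real^'n \<Rightarrow> 'n set" where
  "supp z = {i. z $ i \<noteq> 0}"

definition is_int_vec :: "real^'n \<Rightarrow> bool" where
  "is_int_vec z \<longleftrightarrow> (\<forall>i. z $ i \<in> \<int>)"

text \<open>Circuits: nonzero kernel vectors of inclusion-minimal support, normalised to be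
  the nonzero integer points of their line closest to the origin.\<close>
definition circuits :: "int^'n^'d \<Rightarrow> (real^'n) set" where
  "circuits A = {z. z \<in> kerA A \<and> z \<noteq> 0
      \<and> (\<forall>y\<in>kerA A. y \<noteq> 0 \<longrightarrow> \<not> (supp y \<subset> supp z))
      \<and> is_int_vec z
      \<and> (\<forall>t::real. is_int_vec (t *\<^sub>R z) \<and> t *\<^sub>R z \<noteq> 0 \<longrightarrow> norm z \<le> norm (t *\<^sub>R z))}"

definition l1norm :: "real^'n \<Rightarrow> real" where
  "l1norm z = (\<Sum>i\<in>UNIV. \<bar>z $ i\<bar>)"

definition cost :: "int^'n \<Rightarrow> real^'n \<Rightarrow> real" where
  "cost c x = (\<Sum>i\<in>UNIV. real_of_int (c $ i) * x $ i)"

definition ratio :: "int^'n \<Rightarrow> real^'n \<Rightarrow> real" where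
  "ratio c z = - cost c z / l1norm z"

definition feasible :: "int^'n^'d \<Rightarrow> int^'d \<Rightarrow> int^'n \<Rightarrow> real^'n \<Rightarrow> bool" where
  "feasible A b u x \<longleftrightarrow> realM A *v x = realV b
      \<and> (\<forall>i. 0 \<le> x $ i \<and> x $ i \<le> real_of_int (u $ i))"

definition optimal :: "int^'n^'d \<Rightarrow> int^'d \<Rightarrow> int^'n \<Rightarrow> int^'n \<Rightarrow> real^'n \<Rightarrow> bool" where
  "optimal A b c u x \<longleftrightarrow> feasible A b u x
      \<and> (\<forall>y. feasible A b u y \<longrightarrow> cost c x \<le> cost c y)"

definition feas_dirs :: "int^'n^'d \<Rightarrow> int^'d \<Rightarrow> int^'n \<Rightarrow> real^'n \<Rightarrow> (real^'n) set" where
  "feas_dirs A b u x = {z \<in> circuits A. \<exists>\<epsilon>>0. feasible A b u (x + \<epsilon> *\<^sub>R z)}"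

definition sd_step :: "int^'n^'d \<Rightarrow> int^'d \<Rightarrow> int^'n \<Rightarrow> int^'n \<Rightarrow> real^'n \<Rightarrow> real^'n \<Rightarrow> bool" where
  "sd_step A b c u x x' \<longleftrightarrow> (\<exists>z \<alpha>. z \<in> feas_dirs A b u x
      \<and> (\<forall>z'\<in>feas_dirs A b u x. ratio c z' \<le> ratio c z)
      \<and> ratio c z > 0
      \<and> feasible A b u (x + \<alpha> *\<^sub>R z)
      \<and> (\<forall>\<beta>::real. feasible A b u (x + \<beta> *\<^sub>R z) \<longrightarrow> \<beta> \<le> \<alpha>)
      \<and> x' = x + \<alpha> *\<^sub>R z)"

definition sd_stops :: "int^'n^'d \<Rightarrow> int^'d \<Rightarrow> int^'n \<Rightarrow> int^'n \<Rightarrow> real^'n \<Rightarrow> bool" where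
  "sd_stops A b c u x \<longleftrightarrow> (\<forall>z\<in>feas_dirs A b u x. ratio c z \<le> 0)"

definition num_pos_ratios :: "int^'n^'d \<Rightarrow> int^'n \<Rightarrow> nat" where
  "num_pos_ratios A c = card {r. r > 0 \<and> (\<exists>z\<in>circuits A. ratio c z = r)}"

end

theory Submission
  imports Defs
begin

text \<open>Every nonzero kernel vector g has a conformal circuit, and if \<open>-c\<cdot>g > r \<parallel>g\<parallel>\<^sub>1\<close> with
  \<open>r \<ge> 0\<close>, then some conformal circuit h of g satisfies \<open>-c\<cdot>h > r \<parallel>h\<parallel>\<^sub>1\<close> as well.
  Conformal circuits of y - x are feasible directions at x, so at a feasible x whose steepest ratio is \<open>\<rho> \<ge> 0\<close> every feasible y satisfies
  \<open>-c\<cdot>(y - x) \<le> \<rho> \<parallel>y - x\<parallel>\<^sub>1\<close>. Hence the method stops only at optimal points, and the ratios of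
  successive augmentations never increase. Along a stretch of augmentations with a common
  ratio the gains add up without cancellation in the l1-norm, so the directions are
  sign-compatible. Each maximal step drives a coordinate of its support to a bound, which
  sign-compatibility forbids later steps of the stretch to move again; so such a stretch has at
  most n steps, and there are at most m distinct positive ratios.\<close>

lemma vec_nonzero_component: "(x::real^'n) \<noteq> 0 \<Longrightarrow> \<exists>i. x$i \<noteq> 0"
  by (metis vec_eq_iff zero_index)

lemma kerA_diff: "x \<in> kerA A \<Longrightarrow> y \<in> kerA A \<Longrightarrow> x - y \<in> kerA A"
  by (simp add: kerA_def matrix_vector_mult_diff_distrib)

lemma kerA_scaleR: "x \<in> kerA A \<Longrightarrow> t *\<^sub>R x \<in> kerA A"
  by (simp add: kerA_def matrix_vector_mult_scaleR)

lemma feasible_diff_in_kerA: "feasible A b u x \<Longrightarrow> feasible A b u y \<Longrightarrow> y - x \<in> kerA A"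
  by (simp add: kerA_def feasible_def matrix_vector_mult_diff_distrib)

lemma feasible_add_kerA_iff:
  assumes "feasible A b u x" and "z \<in> kerA A"
  shows "feasible A b u (x + z) \<longleftrightarrow> (\<forall>i. 0 \<le> (x + z)$i \<and> (x + z)$i \<le> real_of_int (u$i))"
  using assms by (simp add: feasible_def kerA_def matrix_vector_right_distrib)

lemma cost_add: "cost c (x + y) = cost c x + cost c y"
  by (simp add: cost_def algebra_simps sum.distrib)

lemma cost_diff: "cost c (x - y) = cost c x - cost c y"
  by (simp add: cost_def algebra_simps sum_subtractf)

lemma cost_scaleR: "cost c (t *\<^sub>R x) = t * cost c x"
  by (simp add: cost_def sum_distrib_left algebra_simps)

lemma cost_sum: "finite J \<Longrightarrow> cost c (\<Sum>j\<in>J. f j) = (\<Sum>j\<in>J. cost c (f j))"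
  by (induction J rule: finite_induct) (simp_all add: cost_add cost_def[where x = 0])

lemma l1norm_pos: "x \<noteq> 0 \<Longrightarrow> 0 < l1norm x"
proof -
  assume "x \<noteq> 0"
  then obtain i where "x$i \<noteq> 0" using vec_nonzero_component by blast
  then have "0 < \<bar>x$i\<bar>" by simp
  also have "\<bar>x$i\<bar> \<le> l1norm x"
    unfolding l1norm_def by (rule member_le_sum) auto
  finally show ?thesis .
qed

lemma l1norm_scaleR: "l1norm (t *\<^sub>R x) = \<bar>t\<bar> * l1norm x"
  by (simp add: l1norm_def sum_distrib_left abs_mult)

lemma l1norm_triangle: "l1norm (x + y) \<le> l1norm x + l1norm y"
  unfolding l1norm_def by (simp add: sum.distrib[symmetric] sum_mono abs_triangle_ineq)

lemma l1norm_sum_le: "finite J \<Longrightarrow> l1norm (\<Sum>j\<in>J. f j) \<le> (\<Sum>j\<in>J. l1norm (f j))"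
proof (induction J rule: finite_induct)
  case empty
  then show ?case by (simp add: l1norm_def)
next
  case (insert a F)
  then show ?case using l1norm_triangle[of "f a" "sum f F"] by simp
qed

lemma l1norm_sum_eq_imp_same_sign:
  assumes "finite J" and eq: "l1norm (\<Sum>j\<in>J. v j) = (\<Sum>j\<in>J. l1norm (v j))"
  shows "(\<forall>j\<in>J. 0 \<le> v j $ i) \<or> (\<forall>j\<in>J. v j $ i \<le> 0)"
proof -
  have "l1norm (\<Sum>j\<in>J. v j) = (\<Sum>i\<in>UNIV. \<bar>\<Sum>j\<in>J. v j $ i\<bar>)"
    by (simp add: l1norm_def)
  moreover have "(\<Sum>j\<in>J. l1norm (v j)) = (\<Sum>i\<in>UNIV. \<Sum>j\<in>J. \<bar>v j $ i\<bar>)"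
    unfolding l1norm_def by (rule sum.swap)
  ultimately have "(\<Sum>i\<in>UNIV. \<bar>\<Sum>j\<in>J. v j $ i\<bar>) = (\<Sum>i\<in>UNIV. \<Sum>j\<in>J. \<bar>v j $ i\<bar>)"
    using eq by simp
  then have coord: "\<bar>\<Sum>j\<in>J. v j $ i\<bar> = (\<Sum>j\<in>J. \<bar>v j $ i\<bar>)"
    by (rule sum_mono_inv) (simp_all add: sum_abs)
  show ?thesis
  proof (cases "0 \<le> (\<Sum>j\<in>J. v j $ i)")
    case True
    then have "(\<Sum>j\<in>J. \<bar>v j $ i\<bar> - v j $ i) = 0" using coord by (simp add: sum_subtractf)
    then have "\<forall>j\<in>J. \<bar>v j $ i\<bar> = v j $ i"
      using sum_nonneg_eq_0_iff[OF \<open>finite J\<close>, of "\<lambda>j. \<bar>v j $ i\<bar> - v j $ i"] by simp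
    then show ?thesis by (metis abs_ge_zero)
  next
    case False
    then have "(\<Sum>j\<in>J. \<bar>v j $ i\<bar> + v j $ i) = 0" using coord by (simp add: sum.distrib)
    then have "\<forall>j\<in>J. \<bar>v j $ i\<bar> + v j $ i = 0"
      using sum_nonneg_eq_0_iff[OF \<open>finite J\<close>, of "\<lambda>j. \<bar>v j $ i\<bar> + v j $ i"] by simp
    then have "\<forall>j\<in>J. v j $ i = - \<bar>v j $ i\<bar>" by (simp add: add_eq_0_iff)
    then show ?thesis by (metis abs_ge_zero neg_le_0_iff_le)
  qed
qed

definition conformal :: "real^'n \<Rightarrow> real^'n \<Rightarrow> bool" where
  "conformal h g \<longleftrightarrow> (\<forall>i. (0 < h$i \<longrightarrow> 0 < g$i) \<and> (h$i < 0 \<longrightarrow> g$i < 0))"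

lemma conformal_iff_mult_pos: "conformal h g \<longleftrightarrow> (\<forall>i. h$i \<noteq> 0 \<longrightarrow> 0 < h$i * g$i)"
proof -
  have "((0 < a \<longrightarrow> 0 < b) \<and> (a < 0 \<longrightarrow> b < 0)) \<longleftrightarrow> (a \<noteq> 0 \<longrightarrow> 0 < a * b)" for a b :: real
    by (auto simp: zero_less_mult_iff)
  then show ?thesis by (simp add: conformal_def)
qed

lemma conformal_refl: "conformal g g"
  by (simp add: conformal_def)

lemma conformal_trans: "conformal a b \<Longrightarrow> conformal b c \<Longrightarrow> conformal a c"
  unfolding conformal_def by blast

lemma conformal_supp: "conformal h g \<Longrightarrow> supp h \<subseteq> supp g"
  unfolding conformal_def supp_def by (auto simp: neq_iff)

lemma conformal_scaleR: "0 < t \<Longrightarrow> conformal h g \<Longrightarrow> conformal (t *\<^sub>R h) g"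
  unfolding conformal_def by (auto simp: zero_less_mult_iff mult_less_0_iff)

lemma l1norm_add_conformal:
  assumes "conformal x (x + y)" and "conformal y (x + y)"
  shows "l1norm (x + y) = l1norm x + l1norm y"
proof -
  have "\<bar>x$i + y$i\<bar> = \<bar>x$i\<bar> + \<bar>y$i\<bar>" for i
  proof -
    have "(0 < x$i \<longrightarrow> 0 < x$i + y$i) \<and> (x$i < 0 \<longrightarrow> x$i + y$i < 0)"
      "(0 < y$i \<longrightarrow> 0 < x$i + y$i) \<and> (y$i < 0 \<longrightarrow> x$i + y$i < 0)"
      using assms by (simp_all add: conformal_def)
    then show ?thesis by (auto simp: abs_if)
  qed
  then show ?thesis by (simp add: l1norm_def sum.distrib)
qed

text \<open>Move from h along -y until the first coordinate of supp y vanishes; no coordinate crosses 0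
  on the way.\<close>
lemma conformal_reduction_pos:
  fixes h y :: "real^'n"
  assumes supp: "supp y \<subseteq> supp h" and i0: "0 < h$i0 * y$i0"
  shows "\<exists>t>0. conformal (h - t *\<^sub>R y) h \<and> (\<exists>i. y$i \<noteq> 0 \<and> (h - t *\<^sub>R y)$i = 0)"
proof -
  define P where "P = {i. 0 < h$i * y$i}"
  define t where "t = Min ((\<lambda>i. h$i / y$i) ` P)"
  have "P \<noteq> {}" using i0 by (auto simp: P_def)
  then have "t \<in> (\<lambda>i. h$i / y$i) ` P" unfolding t_def by (intro Min_in) auto
  then obtain i1 where i1: "i1 \<in> P" "t = h$i1 / y$i1" by blast
  have t_le: "t \<le> h$i / y$i" if "i \<in> P" for i
    unfolding t_def using that by (intro Min_le) auto
  have t_pos: "0 < t" using i1 by (simp add: P_def zero_less_divide_iff zero_less_mult_iff)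
  have "0 < (h$i - t * y$i) * h$i" if nz: "h$i - t * y$i \<noteq> 0" for i
  proof (cases "y$i = 0")
    case True
    then show ?thesis using nz by (auto simp: zero_less_mult_iff neq_iff)
  next
    case False
    define q where "q = h$i / y$i"
    have hq: "h$i = q * y$i" using False by (simp add: q_def)
    have "q \<noteq> t" using nz hq by auto
    have "0 < q * (q - t)"
    proof (cases "0 < q")
      case True
      moreover have "0 < y$i * y$i" using False not_real_square_gt_zero by blast
      ultimately have "i \<in> P" by (simp add: P_def hq mult.assoc)
      then have "t \<le> q" using t_le by (simp add: q_def)
      then show ?thesis using \<open>q \<noteq> t\<close> True by simp
    next
      case False
      moreover have "q \<noteq> 0" using supp \<open>y$i \<noteq> 0\<close> hq by (auto simp: supp_def)
      ultimately show ?thesis using t_pos by (simp add: mult_neg_neg)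
    qed
    moreover have "(h$i - t * y$i) * h$i = (y$i)\<^sup>2 * (q * (q - t))"
      by (simp add: hq power2_eq_square algebra_simps)
    ultimately show ?thesis using False by simp
  qed
  then have "conformal (h - t *\<^sub>R y) h" by (simp add: conformal_iff_mult_pos)
  moreover have "y$i1 \<noteq> 0" "(h - t *\<^sub>R y)$i1 = 0" using i1 by (auto simp: P_def)
  ultimately show ?thesis using t_pos by blast
qed

lemma conformal_reduction:
  fixes h y :: "real^'n"
  assumes "y \<noteq> 0" and "supp y \<subseteq> supp h"
  shows "\<exists>t. conformal (h - t *\<^sub>R y) h \<and> (\<exists>i. y$i \<noteq> 0 \<and> (h - t *\<^sub>R y)$i = 0)"
proof -
  obtain i0 where "y$i0 \<noteq> 0" using assms(1) vec_nonzero_component by blast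
  moreover from this have "h$i0 \<noteq> 0" using assms(2) by (auto simp: supp_def)
  ultimately have "h$i0 * y$i0 \<noteq> 0" by simp
  then consider "0 < h$i0 * y$i0" | "0 < h$i0 * (-y)$i0"
    using neq_iff[of "h$i0 * y$i0" 0] by auto
  then show ?thesis
  proof cases
    case 1
    then show ?thesis using conformal_reduction_pos[OF assms(2)] by blast
  next
    case 2
    moreover have "supp (-y) \<subseteq> supp h" using assms(2) by (simp add: supp_def)
    ultimately obtain t where "conformal (h - t *\<^sub>R (-y)) h"
      "\<exists>i. (-y)$i \<noteq> 0 \<and> (h - t *\<^sub>R (-y))$i = 0"
      using conformal_reduction_pos by blast
    then show ?thesis by (intro exI[of _ "-t"]) simp
  qed
qed

definition kernel_min_support :: "int^'n^'d \<Rightarrow> real^'n \<Rightarrow> bool" where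
  "kernel_min_support A h \<longleftrightarrow> h \<in> kerA A \<and> h \<noteq> 0 \<and> (\<forall>y\<in>kerA A. y \<noteq> 0 \<longrightarrow> \<not> supp y \<subset> supp h)"

lemma circuit_kernel_min_support: "z \<in> circuits A \<Longrightarrow> kernel_min_support A z"
  by (simp add: circuits_def kernel_min_support_def)

text \<open>A conformal kernel vector of least support is of minimal support: a proper subsupport
  would allow a conformal reduction with even smaller support.\<close>
lemma exists_conformal_kernel_min_support:
  assumes g: "g \<in> kerA A" "g \<noteq> 0"
  shows "\<exists>h. kernel_min_support A h \<and> conformal h g"
proof -
  define Q where "Q h \<longleftrightarrow> h \<in> kerA A \<and> h \<noteq> 0 \<and> conformal h g" for h
  have "Q g" using g by (simp add: Q_def conformal_refl)
  then obtain h where hQ: "Q h" and h_least: "\<And>h'. Q h' \<Longrightarrow> card (supp h) \<le> card (supp h')"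
    using ex_has_least_nat[of Q g "\<lambda>h. card (supp h)"] by blast
  have "\<not> supp y \<subset> supp h" if y: "y \<in> kerA A" "y \<noteq> 0" for y
  proof
    assume ps: "supp y \<subset> supp h"
    then obtain t i where conf: "conformal (h - t *\<^sub>R y) h" and i: "y$i \<noteq> 0" "(h - t *\<^sub>R y)$i = 0"
      using conformal_reduction[OF y(2)] by blast
    define w where "w = h - t *\<^sub>R y"
    obtain j where "j \<in> supp h" "j \<notin> supp y" using ps by blast
    then have "w$j \<noteq> 0" by (simp add: w_def supp_def)
    then have "Q w"
      using hQ y conf conformal_trans by (auto simp: Q_def w_def kerA_diff kerA_scaleR)
    moreover have "supp w \<subset> supp h"
    proof -
      have "supp w \<subseteq> supp h" using conformal_supp[OF conf] by (simp add: w_def)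
      moreover have "i \<in> supp h - supp w" using i ps by (auto simp: w_def supp_def)
      ultimately show ?thesis by blast
    qed
    ultimately show False using h_least psubset_card_mono[of "supp h" "supp w"] by fastforce
  qed
  then show ?thesis using hQ by (auto simp: kernel_min_support_def Q_def)
qed

lemma kernel_min_support_multiple:
  assumes h: "kernel_min_support A h" and y: "y \<in> kerA A" "supp y \<subseteq> supp h" and j: "h$j \<noteq> 0"
  shows "y = (y$j / h$j) *\<^sub>R h"
proof (rule ccontr)
  define w where "w = y - (y$j / h$j) *\<^sub>R h"
  assume "y \<noteq> (y$j / h$j) *\<^sub>R h"
  then have "w \<noteq> 0" by (simp add: w_def)
  moreover have "w \<in> kerA A" using h y by (simp add: w_def kernel_min_support_def kerA_diff kerA_scaleR)
  moreover have "supp w \<subset> supp h"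
  proof -
    have "supp w \<subseteq> supp h" using y(2) by (auto simp: supp_def w_def)
    moreover have "w$j = 0" using j by (simp add: w_def)
    ultimately show ?thesis using j by (auto simp: supp_def)
  qed
  ultimately show False using h by (auto simp: kernel_min_support_def)
qed

lemma rat_linear_functional:
  "\<exists>\<phi> :: real \<Rightarrow> rat. (\<forall>x y. \<phi> (x + y) = \<phi> x + \<phi> y) \<and> (\<forall>q x. \<phi> (of_rat q * x) = q * \<phi> x) \<and> \<phi> 1 = 1"
proof -
  interpret vp: vector_space_pair "\<lambda>q x. of_rat q * (x::real)" "(*) :: rat \<Rightarrow> rat \<Rightarrow> rat"
    by unfold_locales (auto simp: algebra_simps of_rat_add of_rat_mult)
  have ind: "vp.vs1.independent {1::real}"
    by (simp add: vp.vs1.independent_insert vp.vs1.span_empty)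
  define \<phi> where "\<phi> = vp.construct {1} (\<lambda>_. 1::rat)"
  interpret l: Vector_Spaces.linear "\<lambda>q x. of_rat q * (x::real)" "(*) :: rat \<Rightarrow> rat \<Rightarrow> rat" \<phi>
    unfolding \<phi>_def by (rule vp.linear_construct[OF ind])
  have "\<phi> 1 = 1" unfolding \<phi>_def by (rule vp.construct_basis[OF ind]) simp
  then show ?thesis using l.add l.scale by blast
qed

text \<open>Applying a \<open>\<rat>\<close>-linear functional with \<open>\<phi> 1 = 1\<close> to the entries of \<open>h / h$j\<close> gives a
  rational kernel vector (A is integral) with no larger support, which by minimality is
  \<open>h / h$j\<close> itself.\<close>
lemma kernel_min_support_ratio_rational:
  assumes h: "kernel_min_support A h" and j: "h$j \<noteq> 0"
  shows "h$i / h$j \<in> \<rat>"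
proof -
  obtain \<phi> :: "real \<Rightarrow> rat" where add: "\<And>x y. \<phi> (x + y) = \<phi> x + \<phi> y"
    and scale: "\<And>q x. \<phi> (of_rat q * x) = q * \<phi> x" and one: "\<phi> 1 = 1"
    using rat_linear_functional by blast
  have zero: "\<phi> 0 = 0" using add[of 0 0] by simp
  have \<phi>_sum: "\<phi> (\<Sum>l\<in>L. f l) = (\<Sum>l\<in>L. \<phi> (f l))" if "finite L" for L and f :: "'n \<Rightarrow> real"
    using that by (induction L rule: finite_induct) (simp_all add: zero add)
  have \<phi>_int: "\<phi> (of_int a * x) = of_int a * \<phi> x" for a x
    using scale[of "of_int a" x] by simp
  define y where "y = (\<chi> i. real_of_rat (\<phi> (h$i / h$j)))"
  have "(realM A *v y)$r = 0" for r
  proof -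
    have "(realM A *v y)$r = real_of_rat (\<Sum>l\<in>UNIV. of_int (A$r$l) * \<phi> (h$l / h$j))"
      by (simp add: matrix_vector_mult_def realM_def y_def of_rat_sum of_rat_mult)
    also have "(\<Sum>l\<in>UNIV. of_int (A$r$l) * \<phi> (h$l / h$j)) = \<phi> (\<Sum>l\<in>UNIV. of_int (A$r$l) * (h$l / h$j))"
      by (simp only: \<phi>_int \<phi>_sum[OF finite])
    also have "(\<Sum>l\<in>UNIV. of_int (A$r$l) * (h$l / h$j)) = (realM A *v h)$r / h$j"
      unfolding matrix_vector_mult_def realM_def vec_lambda_beta sum_divide_distrib by (rule sum.cong) auto
    also have "(realM A *v h)$r = 0" using h by (simp add: kernel_min_support_def kerA_def)
    finally show ?thesis by (simp add: zero)
  qed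
  then have "y \<in> kerA A" by (simp add: kerA_def vec_eq_iff)
  moreover have "supp y \<subseteq> supp h" by (auto simp: supp_def y_def zero)
  ultimately have "y = (y$j / h$j) *\<^sub>R h" by (rule kernel_min_support_multiple[OF h _ _ j])
  then have "y$i = ((1 / h$j) *\<^sub>R h)$i" by (simp add: y_def one)
  then have "h$i / h$j = real_of_rat (\<phi> (h$i / h$j))" by (simp add: y_def)
  then show ?thesis by (metis Rats_of_rat)
qed

lemma is_int_vec_scaleR_abs: "is_int_vec (t *\<^sub>R h) \<Longrightarrow> is_int_vec (\<bar>t\<bar> *\<^sub>R h)"
  by (auto simp: is_int_vec_def abs_if)

lemma int_multiple_of_rational_ratios:
  fixes h :: "real^'n"
  assumes j: "h$j \<noteq> 0" and rat: "\<And>i. h$i / h$j \<in> \<rat>"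
  shows "\<exists>s>0. is_int_vec (s *\<^sub>R h)"
proof -
  have "\<exists>N::int. 0 < N \<and> of_int N * (h$i / h$j) \<in> \<int>" for i
  proof -
    obtain a N :: int where "0 < N" "h$i / h$j = of_int a / of_int N"
      using rat[of i] by (auto elim: Rats_cases')
    then show ?thesis by (intro exI[of _ N]) auto
  qed
  then obtain N where N: "\<And>i. 0 < N i" "\<And>i. of_int (N i) * (h$i / h$j) \<in> \<int>" by metis
  define M where "M = (\<Prod>i\<in>UNIV. N i)"
  have "(of_int M / h$j) * h$i \<in> \<int>" for i
  proof -
    have "M = N i * (\<Prod>l\<in>UNIV - {i}. N l)" unfolding M_def by (simp add: prod.remove)
    then have "(of_int M / h$j) * h$i = of_int (\<Prod>l\<in>UNIV - {i}. N l) * (of_int (N i) * (h$i / h$j))"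
      by simp
    then show ?thesis using N(2)[of i] by (metis Ints_mult Ints_of_int)
  qed
  then have "is_int_vec (\<bar>of_int M / h$j\<bar> *\<^sub>R h)"
    by (intro is_int_vec_scaleR_abs) (simp add: is_int_vec_def)
  moreover have "0 < M" unfolding M_def using N(1) by (intro prod_pos) auto
  ultimately show ?thesis using j by (intro exI[of _ "\<bar>of_int M / h$j\<bar>"]) simp
qed

text \<open>The positive integral multiples of h are \<open>n / \<bar>h$j\<bar>\<close> with n a positive integer, so there
  is a least one.\<close>
lemma least_positive_int_multiple:
  fixes h :: "real^'n"
  assumes j: "h$j \<noteq> 0" and s: "0 < s" "is_int_vec (s *\<^sub>R h)"
  shows "\<exists>t>0. is_int_vec (t *\<^sub>R h) \<and> (\<forall>t'>0. is_int_vec (t' *\<^sub>R h) \<longrightarrow> t \<le> t')"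
proof -
  define K where "K = {n::nat. 0 < n \<and> is_int_vec ((real n / \<bar>h$j\<bar>) *\<^sub>R h)}"
  have to_K: "\<exists>n\<in>K. t = real n / \<bar>h$j\<bar>" if "0 < t" "is_int_vec (t *\<^sub>R h)" for t
  proof -
    have "\<bar>t * h$j\<bar> \<in> \<int>" using that by (simp add: is_int_vec_def)
    then obtain m where m: "\<bar>t * h$j\<bar> = of_int m" by (auto elim: Ints_cases)
    have "0 < m"
      using m that(1) j by (smt (verit) abs_mult mult_pos_pos of_int_le_0_iff zero_less_abs_iff)
    then have "t = real (nat m) / \<bar>h$j\<bar>" using m that(1) j by (simp add: abs_mult field_simps)
    then show ?thesis using that \<open>0 < m\<close> by (intro bexI[of _ "nat m"]) (auto simp: K_def)
  qed
  define n where "n = (LEAST n. n \<in> K)"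
  obtain n0 where "n0 \<in> K" using to_K[OF s] by blast
  then have n: "n \<in> K" and n_least: "\<And>n'. n' \<in> K \<Longrightarrow> n \<le> n'"
    unfolding n_def by (auto intro: LeastI Least_le)
  have "real n / \<bar>h$j\<bar> \<le> t'" if "0 < t'" "is_int_vec (t' *\<^sub>R h)" for t'
    using to_K[OF that] n_least by (auto intro: divide_right_mono)
  then show ?thesis using n j by (intro exI[of _ "real n / \<bar>h$j\<bar>"]) (auto simp: K_def)
qed

lemma kernel_min_support_circuit_multiple:
  assumes h: "kernel_min_support A h"
  shows "\<exists>t>0. t *\<^sub>R h \<in> circuits A"
proof -
  have "h \<noteq> 0" using h by (simp add: kernel_min_support_def)
  then obtain j where j: "h$j \<noteq> 0" using vec_nonzero_component by blast
  obtain s where "0 < s" "is_int_vec (s *\<^sub>R h)"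
    using int_multiple_of_rational_ratios[OF j kernel_min_support_ratio_rational[OF h j]] by blast
  then obtain t where t: "0 < t" "is_int_vec (t *\<^sub>R h)"
    and t_least: "\<And>t'. 0 < t' \<Longrightarrow> is_int_vec (t' *\<^sub>R h) \<Longrightarrow> t \<le> t'"
    using least_positive_int_multiple[OF j] by blast
  have "norm (t *\<^sub>R h) \<le> norm (s' *\<^sub>R t *\<^sub>R h)"
    if "is_int_vec (s' *\<^sub>R t *\<^sub>R h) \<and> s' *\<^sub>R t *\<^sub>R h \<noteq> 0" for s'
  proof -
    have "is_int_vec (\<bar>s' * t\<bar> *\<^sub>R h)" using is_int_vec_scaleR_abs[of "s' * t" h] that by simp
    moreover have "s' \<noteq> 0" using that by auto
    ultimately have "t \<le> \<bar>s' * t\<bar>" using t by (intro t_least) auto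
    then have "1 \<le> \<bar>s'\<bar>" using t by (simp add: abs_mult)
    then have "norm (t *\<^sub>R h) \<le> \<bar>s'\<bar> * norm (t *\<^sub>R h)"
      using mult_right_mono[OF _ norm_ge_zero[of "t *\<^sub>R h"]] by fastforce
    then show ?thesis using norm_scaleR[of s' "t *\<^sub>R h"] by linarith
  qed
  moreover have "supp (t *\<^sub>R h) = supp h" using t by (auto simp: supp_def)
  then have "kernel_min_support A (t *\<^sub>R h)"
    using h t by (simp add: kernel_min_support_def kerA_scaleR)
  ultimately have "t *\<^sub>R h \<in> circuits A"
    using t(2) unfolding circuits_def kernel_min_support_def by blast
  then show ?thesis using t by blast
qed

lemma exists_conformal_circuit:
  assumes "g \<in> kerA A" and "g \<noteq> 0"
  shows "\<exists>h\<in>circuits A. conformal h g"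
proof -
  obtain h where h: "kernel_min_support A h" "conformal h g"
    using exists_conformal_kernel_min_support[OF assms] by blast
  moreover obtain t where "0 < t" "t *\<^sub>R h \<in> circuits A"
    using kernel_min_support_circuit_multiple[OF h(1)] by blast
  ultimately show ?thesis using conformal_scaleR by blast
qed

text \<open>Induction on the support: if a conformal circuit h of g fails the inequality, subtract the
  largest multiple t h that keeps g - t h conformal to g. Then g - t h still satisfies the
  inequality, and its support is strictly smaller.\<close>
lemma exists_conformal_circuit_ratio_gt:
  assumes "g \<in> kerA A" and "0 \<le> r" and "r * l1norm g < - cost c g"
  shows "\<exists>h\<in>circuits A. conformal h g \<and> r * l1norm h < - cost c h"
  using assms
proof (induction "card (supp g)" arbitrary: g rule: less_induct)
  case less
  have "g \<noteq> 0" using less.prems by (auto simp: cost_def l1norm_def)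
  then obtain h where h: "h \<in> circuits A" "conformal h g"
    using exists_conformal_circuit less.prems(1) by blast
  show ?case
  proof (cases "r * l1norm h < - cost c h")
    case True
    then show ?thesis using h by blast
  next
    case False
    have "h \<noteq> 0" using h(1) by (simp add: circuits_def)
    then obtain i0 where "h$i0 \<noteq> 0" using vec_nonzero_component by blast
    then have "0 < g$i0 * h$i0" using h(2) by (simp add: conformal_iff_mult_pos mult.commute)
    then obtain t i where t: "0 < t" "conformal (g - t *\<^sub>R h) g"
      and i: "h$i \<noteq> 0" "(g - t *\<^sub>R h)$i = 0"
      using conformal_reduction_pos[OF conformal_supp[OF h(2)]] by blast
    define w where "w = g - t *\<^sub>R h"
    have "l1norm g = l1norm w + t * l1norm h"
      using l1norm_add_conformal[of w "t *\<^sub>R h"] t conformal_scaleR[OF t(1) h(2)]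
      by (simp add: w_def l1norm_scaleR)
    moreover have "cost c g = cost c w + t * cost c h" by (simp add: w_def cost_diff cost_scaleR)
    moreover have "t * (- cost c h) \<le> t * (r * l1norm h)"
      using False t(1) by (intro mult_left_mono) auto
    ultimately have "r * l1norm w < - cost c w" using less.prems(3) by (simp add: algebra_simps)
    moreover have "w \<in> kerA A"
      using less.prems(1) h(1) by (simp add: w_def circuits_def kerA_diff kerA_scaleR)
    moreover have "card (supp w) < card (supp g)"
    proof (rule psubset_card_mono)
      have "supp w \<subseteq> supp g" using conformal_supp[OF t(2)] by (simp add: w_def)
      moreover have "i \<in> supp g - supp w" using i conformal_supp[OF h(2)] by (auto simp: w_def supp_def)
      ultimately show "supp w \<subset> supp g" by blast
    qed simp
    ultimately obtain h' where "h' \<in> circuits A" "conformal h' w" "r * l1norm h' < - cost c h'"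
      using less.hyps less.prems(2) by blast
    then show ?thesis using t(2) conformal_trans by (auto simp: w_def)
  qed
qed

lemma feasible_step_of_slack:
  assumes x: "feasible A b u x" and z: "z \<in> kerA A"
    and slack: "\<And>i. 0 < z$i \<Longrightarrow> x$i < u$i" "\<And>i. z$i < 0 \<Longrightarrow> 0 < x$i"
  shows "\<exists>\<epsilon>>0. feasible A b u (x + \<epsilon> *\<^sub>R z)"
proof -
  have bounds: "0 \<le> x$i" "x$i \<le> u$i" for i using x by (auto simp: feasible_def)
  have "\<forall>\<^sub>F \<epsilon> in at_right 0. 0 \<le> x$i + \<epsilon> * z$i \<and> x$i + \<epsilon> * z$i \<le> u$i" for i
  proof -
    have lim: "((\<lambda>\<epsilon>. x$i + \<epsilon> * z$i) \<longlongrightarrow> x$i) (at_right 0)"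
      by (auto intro!: tendsto_eq_intros)
    have pos: "\<forall>\<^sub>F \<epsilon> in at_right (0::real). 0 < \<epsilon>" by (rule eventually_at_right_less)
    consider "z$i = 0" | "0 < z$i" | "z$i < 0" by linarith
    then show ?thesis
    proof cases
      case 1
      then show ?thesis using bounds by simp
    next
      case 2
      show ?thesis using pos order_tendstoD(2)[OF lim slack(1)[OF 2]]
        by eventually_elim (use bounds[of i] 2 in auto)
    next
      case 3
      show ?thesis using pos order_tendstoD(1)[OF lim slack(2)[OF 3]]
        by eventually_elim (use bounds[of i] 3 in \<open>smt (verit) mult_pos_neg\<close>)
    qed
  qed
  then have "\<forall>\<^sub>F \<epsilon> in at_right 0. \<forall>i. 0 \<le> x$i + \<epsilon> * z$i \<and> x$i + \<epsilon> * z$i \<le> u$i"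
    by (rule eventually_all_finite)
  with eventually_at_right_less
  have "\<forall>\<^sub>F \<epsilon> in at_right 0. 0 < \<epsilon> \<and> (\<forall>i. 0 \<le> x$i + \<epsilon> * z$i \<and> x$i + \<epsilon> * z$i \<le> u$i)"
    by (rule eventually_conj)
  then obtain \<epsilon> where "0 < \<epsilon>" "\<forall>i. 0 \<le> x$i + \<epsilon> * z$i \<and> x$i + \<epsilon> * z$i \<le> u$i"
    using eventually_happens'[OF trivial_limit_at_right_real] by blast
  moreover have "\<epsilon> *\<^sub>R z \<in> kerA A" using z by (rule kerA_scaleR)
  ultimately show ?thesis using x by (auto simp: feasible_add_kerA_iff)
qed

lemma feasible_conformal_direction:
  assumes x: "feasible A b u x" and y: "feasible A b u y" and h: "h \<in> kerA A"
    and "conformal h (y - x)"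
  shows "\<exists>\<epsilon>>0. feasible A b u (x + \<epsilon> *\<^sub>R h)"
proof (rule feasible_step_of_slack[OF x h])
  fix i
  have "0 \<le> y$i" "y$i \<le> u$i" using y by (auto simp: feasible_def)
  moreover have "(0 < h$i \<longrightarrow> 0 < y$i - x$i) \<and> (h$i < 0 \<longrightarrow> y$i - x$i < 0)"
    using \<open>conformal h (y - x)\<close> by (simp add: conformal_def)
  ultimately show "0 < h$i \<Longrightarrow> x$i < u$i" and "h$i < 0 \<Longrightarrow> 0 < x$i" by linarith+
qed

lemma exists_feas_dir_ratio_gt:
  assumes x: "feasible A b u x" and y: "feasible A b u y" and "0 \<le> r"
    and gain: "r * l1norm (y - x) < - cost c (y - x)"
  shows "\<exists>h\<in>feas_dirs A b u x. r < ratio c h"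
proof -
  obtain h where h: "h \<in> circuits A" "conformal h (y - x)" "r * l1norm h < - cost c h"
    using exists_conformal_circuit_ratio_gt[OF feasible_diff_in_kerA[OF x y] \<open>0 \<le> r\<close> gain] by blast
  then have "h \<in> feas_dirs A b u x"
    using feasible_conformal_direction[OF x y] by (auto simp: feas_dirs_def circuits_def)
  moreover have "0 < l1norm h" using h(1) by (simp add: circuits_def l1norm_pos)
  then have "r < ratio c h" using h(3) by (simp add: ratio_def field_simps)
  ultimately show ?thesis by blast
qed

lemma steepest_ratio_bounds_gain:
  assumes x: "feasible A b u x" and y: "feasible A b u y"
    and steepest: "\<And>z'. z' \<in> feas_dirs A b u x \<Longrightarrow> ratio c z' \<le> \<rho>" and "0 \<le> \<rho>"
  shows "- cost c (y - x) \<le> \<rho> * l1norm (y - x)"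
proof (rule ccontr)
  assume "\<not> ?thesis"
  then obtain h where "h \<in> feas_dirs A b u x" "\<rho> < ratio c h"
    using exists_feas_dir_ratio_gt[OF x y \<open>0 \<le> \<rho>\<close>, of c] by force
  then show False using steepest by force
qed

lemma sd_stops_imp_optimal:
  assumes x: "feasible A b u x" and "sd_stops A b c u x"
  shows "optimal A b c u x"
proof -
  have "cost c x \<le> cost c y" if "feasible A b u y" for y
    using steepest_ratio_bounds_gain[OF x that, of c 0] \<open>sd_stops A b c u x\<close>
    by (simp add: sd_stops_def cost_diff)
  then show ?thesis using x by (simp add: optimal_def)
qed

definition drives_to_bound :: "int^'n \<Rightarrow> real^'n \<Rightarrow> real^'n \<Rightarrow> 'n \<Rightarrow> bool" where
  "drives_to_bound u z x i \<longleftrightarrow> z$i \<noteq> 0 \<and> (0 < z$i \<longrightarrow> x$i = u$i) \<and> (z$i < 0 \<longrightarrow> x$i = 0)"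

lemma maximal_step_drives_to_bound:
  assumes "feasible A b u (x + \<alpha> *\<^sub>R z)" and "z \<in> kerA A"
    and maximal: "\<And>\<beta>. feasible A b u (x + \<beta> *\<^sub>R z) \<Longrightarrow> \<beta> \<le> \<alpha>"
  shows "\<exists>i. drives_to_bound u z (x + \<alpha> *\<^sub>R z) i"
proof (rule ccontr)
  define x' where "x' = x + \<alpha> *\<^sub>R z"
  have bounds: "0 \<le> x'$i" "x'$i \<le> u$i" for i using assms(1) by (auto simp: feasible_def x'_def)
  assume "\<not> ?thesis"
  then have no_bound: "\<not> drives_to_bound u z x' i" for i by (simp add: x'_def)
  have "x'$i < u$i" if "0 < z$i" for i
    using that no_bound[of i] bounds[of i] by (simp add: drives_to_bound_def less_le)
  moreover have "0 < x'$i" if "z$i < 0" for i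
    using that no_bound[of i] bounds[of i] by (simp add: drives_to_bound_def less_le)
  ultimately obtain \<epsilon> where "0 < \<epsilon>" "feasible A b u (x' + \<epsilon> *\<^sub>R z)"
    using feasible_step_of_slack[OF assms(1)[folded x'_def] assms(2)] by blast
  moreover have "x' + \<epsilon> *\<^sub>R z = x + (\<alpha> + \<epsilon>) *\<^sub>R z" by (simp add: x'_def scaleR_add_left)
  ultimately show False using maximal[of "\<alpha> + \<epsilon>"] by simp
qed

lemma cost_eq_neg_ratio_mult: "z \<noteq> 0 \<Longrightarrow> cost c z = - (ratio c z * l1norm z)"
  using l1norm_pos[of z] by (simp add: ratio_def)

lemma ratio_scaleR: "ratio c (s *\<^sub>R z) = sgn s * ratio c z"
  by (simp add: ratio_def cost_scaleR l1norm_scaleR sgn_if)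

lemma positive_ratio_determined_by_supp:
  assumes z: "z \<in> circuits A" and z': "z' \<in> circuits A" and "supp z' = supp z"
    and "0 < ratio c z" and "0 < ratio c z'"
  shows "ratio c z' = ratio c z"
proof -
  have "z \<noteq> 0" using z by (simp add: circuits_def)
  then obtain j where j: "z$j \<noteq> 0" using vec_nonzero_component by blast
  have "z' = (z'$j / z$j) *\<^sub>R z"
    using kernel_min_support_multiple[OF circuit_kernel_min_support[OF z] _ _ j] z' \<open>supp z' = supp z\<close>
    by (simp add: circuits_def)
  then have "ratio c z' = sgn (z'$j / z$j) * ratio c z" by (metis ratio_scaleR)
  then show ?thesis using assms(4,5) by (auto simp: sgn_if split: if_splits)
qed

text \<open>Each support carries at most one positive ratio, and there are finitely many supports.\<close>
lemma finite_positive_ratios: "finite {r. 0 < r \<and> (\<exists>z\<in>circuits A. ratio c z = r)}"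
proof (rule finite_subset)
  define f where "f T = (SOME r. 0 < r \<and> (\<exists>z\<in>circuits A. supp z = T \<and> ratio c z = r))" for T
  show "{r. 0 < r \<and> (\<exists>z\<in>circuits A. ratio c z = r)} \<subseteq> range f"
  proof
    fix r assume "r \<in> {r. 0 < r \<and> (\<exists>z\<in>circuits A. ratio c z = r)}"
    then obtain z where z: "z \<in> circuits A" "ratio c z = r" "0 < r" by blast
    have "f (supp z) = r" unfolding f_def
    proof (rule some_equality)
      show "0 < r \<and> (\<exists>z'\<in>circuits A. supp z' = supp z \<and> ratio c z' = r)" using z by blast
    next
      fix r' assume "0 < r' \<and> (\<exists>z'\<in>circuits A. supp z' = supp z \<and> ratio c z' = r')"
      then show "r' = r" using positive_ratio_determined_by_supp[OF z(1)] z by metis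
    qed
    then show "r \<in> range f" by (metis rangeI)
  qed
qed simp

lemma card_le_mult_card_levels:
  assumes "finite S" and "\<And>j. j < k \<Longrightarrow> f j \<in> S"
    and "\<And>s. card {j. j < k \<and> f j = s} \<le> N"
  shows "k \<le> N * card S"
proof -
  have "{..<k} \<subseteq> (\<Union>s\<in>S. {j. j < k \<and> f j = s})" using assms(2) by auto
  moreover have "finite (\<Union>s\<in>S. {j. j < k \<and> f j = s})"
    by (rule finite_subset[of _ "{..<k}"]) auto
  ultimately have "k \<le> card (\<Union>s\<in>S. {j. j < k \<and> f j = s})"
    using card_mono[of "\<Union>s\<in>S. {j. j < k \<and> f j = s}" "{..<k}"] by simp
  also have "\<dots> \<le> (\<Sum>s\<in>S. card {j. j < k \<and> f j = s})" by (rule card_UN_le[OF assms(1)])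
  also have "\<dots> \<le> (\<Sum>s\<in>S. N)" by (rule sum_mono) (rule assms(3))
  finally show ?thesis by (simp add: mult.commute)
qed

locale steepest_descent_run =
  fixes A :: "int^'n^'d" and b :: "int^'d" and c u :: "int^'n"
    and xs :: "nat \<Rightarrow> real^'n" and k :: nat
    and z :: "nat \<Rightarrow> real^'n" and \<alpha> :: "nat \<Rightarrow> real"
  assumes feasible_start: "feasible A b u (xs 0)"
    and dir_feasible: "j < k \<Longrightarrow> z j \<in> feas_dirs A b u (xs j)"
    and dir_steepest: "j < k \<Longrightarrow> z' \<in> feas_dirs A b u (xs j) \<Longrightarrow> ratio c z' \<le> ratio c (z j)"
    and dir_improving: "j < k \<Longrightarrow> 0 < ratio c (z j)"
    and step_feasible: "j < k \<Longrightarrow> feasible A b u (xs j + \<alpha> j *\<^sub>R z j)"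
    and step_maximal: "j < k \<Longrightarrow> feasible A b u (xs j + \<beta> *\<^sub>R z j) \<Longrightarrow> \<beta> \<le> \<alpha> j"
    and step_eq: "j < k \<Longrightarrow> xs (Suc j) = xs j + \<alpha> j *\<^sub>R z j"
begin

lemma dir_circuit: "j < k \<Longrightarrow> z j \<in> circuits A"
  using dir_feasible by (simp add: feas_dirs_def)

lemma dir_nonzero: "j < k \<Longrightarrow> z j \<noteq> 0"
  using dir_circuit by (simp add: circuits_def)

lemma feasible_iterate: "j \<le> k \<Longrightarrow> feasible A b u (xs j)"
  by (cases j) (auto simp: feasible_start step_eq step_feasible)

lemma step_pos:
  assumes "j < k"
  shows "0 < \<alpha> j"
proof -
  obtain \<epsilon> where "0 < \<epsilon>" "feasible A b u (xs j + \<epsilon> *\<^sub>R z j)"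
    using dir_feasible[OF assms] by (auto simp: feas_dirs_def)
  then show ?thesis using step_maximal[OF assms] by fastforce
qed

lemma step_drives_to_bound:
  assumes "j < k"
  shows "\<exists>i. drives_to_bound u (z j) (xs (Suc j)) i"
proof -
  have "z j \<in> kerA A" using dir_circuit[OF assms] by (simp add: circuits_def)
  then show ?thesis
    using maximal_step_drives_to_bound[OF step_feasible[OF assms]] step_maximal[OF assms]
      step_eq[OF assms]
    by simp
qed

lemma iterate_eq_sum: "l \<le> m \<Longrightarrow> m \<le> k \<Longrightarrow> xs m = xs l + (\<Sum>q\<in>{l..<m}. \<alpha> q *\<^sub>R z q)"
proof (induction m rule: dec_induct)
  case (step m)
  then show ?case using step_eq[of m] by simp
qed simp

lemma gain_from_iterate_le:
  assumes "j < k" and "feasible A b u y"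
  shows "- cost c (y - xs j) \<le> ratio c (z j) * l1norm (y - xs j)"
  using steepest_ratio_bounds_gain[OF feasible_iterate assms(2)] dir_steepest dir_improving assms(1)
  by (simp add: less_imp_le)

text \<open>Were the next ratio larger, a small step along z (Suc j) after the step along z j would
  beat the steepest ratio at xs j.\<close>
lemma ratio_step_nonincreasing:
  assumes "Suc j < k"
  shows "ratio c (z (Suc j)) \<le> ratio c (z j)"
proof (rule ccontr)
  assume "\<not> ?thesis"
  then have gt: "ratio c (z j) < ratio c (z (Suc j))" by simp
  have j: "j < k" using assms by simp
  obtain d where d: "0 < d" "feasible A b u (xs (Suc j) + d *\<^sub>R z (Suc j))"
    using dir_feasible[OF assms] by (auto simp: feas_dirs_def)
  define y where "y = xs (Suc j) + d *\<^sub>R z (Suc j)"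
  have y: "y - xs j = \<alpha> j *\<^sub>R z j + d *\<^sub>R z (Suc j)" using step_eq[OF j] by (simp add: y_def)
  have "ratio c (z j) * l1norm (y - xs j)
      \<le> ratio c (z j) * (\<alpha> j * l1norm (z j) + d * l1norm (z (Suc j)))"
    using l1norm_triangle[of "\<alpha> j *\<^sub>R z j" "d *\<^sub>R z (Suc j)"] step_pos[OF j] d(1) dir_improving[OF j]
    by (intro mult_left_mono) (simp_all add: y l1norm_scaleR)
  also have "\<dots> < \<alpha> j * (ratio c (z j) * l1norm (z j)) + d * (ratio c (z (Suc j)) * l1norm (z (Suc j)))"
    using gt d(1) l1norm_pos[OF dir_nonzero[OF assms]] by (simp add: algebra_simps)
  also have "\<dots> = - cost c (y - xs j)"
    using dir_nonzero[OF j] dir_nonzero[OF assms]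
    by (simp add: y cost_add cost_scaleR cost_eq_neg_ratio_mult algebra_simps)
  finally show False using gain_from_iterate_le[OF j d(2)[folded y_def]] by simp
qed

lemma ratio_nonincreasing: "i \<le> j \<Longrightarrow> j < k \<Longrightarrow> ratio c (z j) \<le> ratio c (z i)"
proof (induction j rule: dec_induct)
  case (step m)
  then show ?case using ratio_step_nonincreasing[of m] by simp
qed simp

text \<open>Along a stretch of steps with a common ratio, the gains add up without loss in the
  l1-norm, so the steps are sign-compatible.\<close>
lemma equal_ratio_steps_same_sign:
  assumes "m \<le> k" and equal: "\<And>q. q \<in> {a..<m} \<Longrightarrow> ratio c (z q) = \<rho>"
  shows "(\<forall>q\<in>{a..<m}. 0 \<le> z q $ i) \<or> (\<forall>q\<in>{a..<m}. z q $ i \<le> 0)"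
proof (cases "a < m")
  case False
  then show ?thesis by simp
next
  case True
  define D where "D = (\<Sum>q\<in>{a..<m}. \<alpha> q *\<^sub>R z q)"
  have "a < k" using True \<open>m \<le> k\<close> by simp
  then have \<rho>_pos: "0 < \<rho>" using dir_improving equal[of a] True by fastforce
  have \<alpha>_pos: "0 < \<alpha> q" if "q \<in> {a..<m}" for q using step_pos that \<open>m \<le> k\<close> by simp
  have "- cost c D = (\<Sum>q\<in>{a..<m}. \<alpha> q * (- cost c (z q)))"
    by (simp add: D_def cost_sum cost_scaleR sum_negf)
  also have "\<dots> = \<rho> * (\<Sum>q\<in>{a..<m}. l1norm (\<alpha> q *\<^sub>R z q))"
    unfolding sum_distrib_left
  proof (rule sum.cong)
    fix q assume q: "q \<in> {a..<m}"
    then have "z q \<noteq> 0" using dir_nonzero \<open>m \<le> k\<close> by simp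
    then show "\<alpha> q * (- cost c (z q)) = \<rho> * l1norm (\<alpha> q *\<^sub>R z q)"
      using equal[OF q] \<alpha>_pos[OF q] by (simp add: cost_eq_neg_ratio_mult l1norm_scaleR)
  qed simp
  finally have gain: "- cost c D = \<rho> * (\<Sum>q\<in>{a..<m}. l1norm (\<alpha> q *\<^sub>R z q))" .
  have "- cost c D \<le> \<rho> * l1norm D"
    using gain_from_iterate_le[of a "xs m"] feasible_iterate[OF \<open>m \<le> k\<close>] True \<open>m \<le> k\<close>
      iterate_eq_sum[of a m] equal[of a] by (simp add: D_def)
  then have "(\<Sum>q\<in>{a..<m}. l1norm (\<alpha> q *\<^sub>R z q)) \<le> l1norm D"
    using gain \<rho>_pos by (simp add: mult_le_cancel_left_pos)
  moreover have "l1norm D \<le> (\<Sum>q\<in>{a..<m}. l1norm (\<alpha> q *\<^sub>R z q))"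
    unfolding D_def by (rule l1norm_sum_le) simp
  ultimately have "(\<forall>q\<in>{a..<m}. 0 \<le> (\<alpha> q *\<^sub>R z q) $ i) \<or> (\<forall>q\<in>{a..<m}. (\<alpha> q *\<^sub>R z q) $ i \<le> 0)"
    using l1norm_sum_eq_imp_same_sign[of "{a..<m}" "\<lambda>q. \<alpha> q *\<^sub>R z q"] by (simp add: D_def)
  moreover have "(0 \<le> (\<alpha> q *\<^sub>R z q) $ i \<longleftrightarrow> 0 \<le> z q $ i) \<and> ((\<alpha> q *\<^sub>R z q) $ i \<le> 0 \<longleftrightarrow> z q $ i \<le> 0)"
    if "q \<in> {a..<m}" for q
    using \<alpha>_pos[OF that] by (simp add: zero_le_mult_iff mult_le_0_iff)
  ultimately show ?thesis by blast
qed

text \<open>Once a step of such a stretch has driven coordinate i to a bound, sign-compatibility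
  keeps every later step of the stretch off that coordinate.\<close>
lemma equal_ratio_steps_leave_bound:
  assumes "m \<le> k" and equal: "\<And>q. q \<in> {a..<m} \<Longrightarrow> ratio c (z q) = \<rho>"
    and q: "a \<le> q" "q < q'" "q' < m" and hit: "drives_to_bound u (z q) (xs (Suc q)) i"
  shows "z q' $ i = 0"
proof (rule ccontr)
  assume nz: "z q' $ i \<noteq> 0"
  define L where "L = {Suc q..<Suc q'}"
  have L: "finite L" "q' \<in> L" "\<And>l. l \<in> L \<Longrightarrow> l \<in> {a..<m}" using q by (auto simp: L_def)
  have \<alpha>_pos: "0 < \<alpha> l" if "l \<in> L" for l using step_pos L(3)[OF that] \<open>m \<le> k\<close> by simp
  have step: "xs (Suc q') $ i = xs (Suc q) $ i + (\<Sum>l\<in>L. \<alpha> l * z l $ i)"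
    using iterate_eq_sum[of "Suc q" "Suc q'"] q \<open>m \<le> k\<close> by (simp add: L_def)
  have bounds: "0 \<le> xs (Suc q') $ i" "xs (Suc q') $ i \<le> u$i"
    using feasible_iterate[of "Suc q'"] q \<open>m \<le> k\<close> by (auto simp: feasible_def)
  have sign: "(\<forall>l\<in>{a..<m}. 0 \<le> z l $ i) \<or> (\<forall>l\<in>{a..<m}. z l $ i \<le> 0)"
    by (rule equal_ratio_steps_same_sign[OF \<open>m \<le> k\<close> equal])
  have "q \<in> {a..<m}" using q by simp
  consider "0 < z q $ i" | "z q $ i < 0" using hit by (auto simp: drives_to_bound_def neq_iff)
  then show False
  proof cases
    case 1
    then have "\<forall>l\<in>{a..<m}. 0 \<le> z l $ i" using sign \<open>q \<in> {a..<m}\<close> by fastforce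
    then have "0 < (\<Sum>l\<in>L. \<alpha> l * z l $ i)"
      using L \<alpha>_pos nz by (intro sum_pos2[of L q']) (auto simp: less_le)
    moreover have "xs (Suc q) $ i = u$i" using hit 1 by (simp add: drives_to_bound_def)
    ultimately show False using step bounds by linarith
  next
    case 2
    then have "\<forall>l\<in>{a..<m}. z l $ i \<le> 0" using sign \<open>q \<in> {a..<m}\<close> by fastforce
    then have "0 < (\<Sum>l\<in>L. \<alpha> l * - z l $ i)"
      using L \<alpha>_pos nz by (intro sum_pos2[of L q']) (auto simp: less_le mult_nonneg_nonpos)
    moreover have "xs (Suc q) $ i = 0" using hit 2 by (simp add: drives_to_bound_def)
    ultimately show False using step bounds by (simp add: sum_negf)
  qed
qed

text \<open>Each step of such a stretch drives its own coordinate to a bound, and no two steps share one.\<close>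
lemma equal_ratio_steps_length:
  assumes "m \<le> k" and equal: "\<And>q. q \<in> {a..<m} \<Longrightarrow> ratio c (z q) = \<rho>"
  shows "m - a \<le> CARD('n)"
proof -
  define hit where "hit q = (SOME i. drives_to_bound u (z q) (xs (Suc q)) i)" for q
  have hit: "drives_to_bound u (z q) (xs (Suc q)) (hit q)" if "q \<in> {a..<m}" for q
    unfolding hit_def using step_drives_to_bound[of q] that \<open>m \<le> k\<close> by (auto intro: someI_ex)
  have "inj_on hit {a..<m}"
  proof (rule inj_onI, rule ccontr)
    fix q q' assume q: "q \<in> {a..<m}" "q' \<in> {a..<m}" "hit q = hit q'" "q \<noteq> q'"
    have "z q' $ hit q = 0" if "q < q'"
      using equal_ratio_steps_leave_bound[of m a \<rho> q q' "hit q", OF \<open>m \<le> k\<close> equal]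
        q(1,2) that hit[OF q(1)]
      by simp
    moreover have "z q $ hit q' = 0" if "q' < q"
      using equal_ratio_steps_leave_bound[of m a \<rho> q' q "hit q'", OF \<open>m \<le> k\<close> equal]
        q(1,2) that hit[OF q(2)]
      by simp
    ultimately show False
      using hit[OF q(1)] hit[OF q(2)] q(3,4) by (auto simp: drives_to_bound_def neq_iff)
  qed
  then have "card {a..<m} \<le> CARD('n)" by (rule card_inj_on_le) auto
  then show ?thesis by simp
qed

lemma card_steps_with_ratio: "card {j. j < k \<and> ratio c (z j) = \<rho>} \<le> CARD('n)"
proof -
  define J where "J = {j. j < k \<and> ratio c (z j) = \<rho>}"
  have J_mem: "j \<in> J \<longleftrightarrow> j < k \<and> ratio c (z j) = \<rho>" for j by (simp add: J_def)
  have "card J \<le> CARD('n)"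
  proof (cases "J = {}")
    case False
    have "finite J" by (simp add: J_def)
    then have J: "Min J \<in> J" "Max J \<in> J" "J \<subseteq> {Min J..<Suc (Max J)}"
      using False by (auto simp: le_imp_less_Suc)
    then have ends: "Max J < k" "ratio c (z (Min J)) = \<rho>" "ratio c (z (Max J)) = \<rho>"
      by (simp_all add: J_mem)
    have "ratio c (z j) = \<rho>" if "j \<in> {Min J..<Suc (Max J)}" for j
    proof -
      have "Min J \<le> j" "j \<le> Max J" "j < k" using that ends(1) by auto
      then show ?thesis
        using ratio_nonincreasing[of "Min J" j] ratio_nonincreasing[of j "Max J"] ends by simp
    qed
    then have "Suc (Max J) - Min J \<le> CARD('n)"
      using equal_ratio_steps_length[of "Suc (Max J)"] ends(1) by simp
    moreover have "card J \<le> card {Min J..<Suc (Max J)}" using J(3) by (intro card_mono) auto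
    ultimately show ?thesis by simp
  qed simp
  then show ?thesis by (simp add: J_def)
qed

lemma steps_le: "k \<le> CARD('n) * num_pos_ratios A c"
  unfolding num_pos_ratios_def
  using dir_circuit dir_improving
  by (intro card_le_mult_card_levels[OF finite_positive_ratios _ card_steps_with_ratio]) blast

end

lemma steepest_descent_run_exists:
  assumes "feasible A b u (xs 0)" and "\<forall>j<k. sd_step A b c u (xs j) (xs (Suc j))"
  obtains z \<alpha> where "steepest_descent_run A b c u xs k z \<alpha>"
proof -
  have "\<forall>j. \<exists>z \<alpha>. j < k \<longrightarrow> z \<in> feas_dirs A b u (xs j)
      \<and> (\<forall>z'\<in>feas_dirs A b u (xs j). ratio c z' \<le> ratio c z) \<and> 0 < ratio c z
      \<and> feasible A b u (xs j + \<alpha> *\<^sub>R z)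
      \<and> (\<forall>\<beta>. feasible A b u (xs j + \<beta> *\<^sub>R z) \<longrightarrow> \<beta> \<le> \<alpha>)
      \<and> xs (Suc j) = xs j + \<alpha> *\<^sub>R z"
    using assms(2) unfolding sd_step_def by blast
  then obtain z \<alpha> where "\<And>j. j < k \<Longrightarrow> z j \<in> feas_dirs A b u (xs j)
      \<and> (\<forall>z'\<in>feas_dirs A b u (xs j). ratio c z' \<le> ratio c (z j)) \<and> 0 < ratio c (z j)
      \<and> feasible A b u (xs j + \<alpha> j *\<^sub>R z j)
      \<and> (\<forall>\<beta>. feasible A b u (xs j + \<beta> *\<^sub>R z j) \<longrightarrow> \<beta> \<le> \<alpha> j)
      \<and> xs (Suc j) = xs j + \<alpha> j *\<^sub>R z j"
    by metis
  then have "steepest_descent_run A b c u xs k z \<alpha>"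
    using assms(1) by unfold_locales blast+
  then show thesis by (rule that)
qed

theorem corollary2:
  fixes A :: "int^'n^'d" and b :: "int^'d" and c u :: "int^'n"
    and xs :: "nat \<Rightarrow> real^'n" and k :: nat
  assumes "\<forall>i. 0 \<le> u $ i"
    and "feasible A b u (xs 0)"
    and "\<forall>j<k. sd_step A b c u (xs j) (xs (Suc j))"
  shows "k \<le> CARD('n) * num_pos_ratios A c
         \<and> (sd_stops A b c u (xs k) \<longrightarrow> optimal A b c u (xs k))"
proof -
  obtain z \<alpha> where "steepest_descent_run A b c u xs k z \<alpha>"
    using steepest_descent_run_exists[OF assms(2,3)] .
  then interpret steepest_descent_run A b c u xs k z \<alpha> .
  show ?thesis using steps_le sd_stops_imp_optimal[OF feasible_iterate] by blast
qed

end
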